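(* Let $G$ be a graph with vertex set $[n]$ and fix a threshold $r\ge2$. Let $\mathcal{D}_0$ be any probability distribution over subsets of $[n]$ (a randomized rule for choosing seed sets). For $A\sim\mathcal{D}_0$ and each vertex $i$, let $p_i=\Pr[i\in A]$ and $q_i=\Pr[i\in\langle A\rangle]$, and assume $q_i>0$ for every $i$. Then there is a probability distribution $\mathcal{D}$ over contagious sets of $G$ such that for every vertex $i$, $\Pr_{S\sim\mathcal{D}}[i\in S]\le p_i/q_i$. In particular, if each vertex is a seed independently with probability $p$ and each vertex is activated with probability at least $1/C$ ($C>1$), then $m(G,r)\le Cpn$.
   Context: Bootstrap percolation with threshold $r\ge 2$ on a graph $G=(V,E)$: given a set $A_0\subseteq V$ of seeds, define for $i\ge1$ $A_i=A_{i-1}\cup\{v:|N(v)\cap A_{i-1}|\ge r\}$, where $N(v)$ is the set of neighbors of $v$, and $\langle A_0\rangle=\bigcup_i A_i$ (the set of activated vertices). The set $A_0$ is contagious if $\langle A_0\rangle=V$; $m(G,r)$ denotes the minimum cardinality of a contagious set. *)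

theory Defs
  imports "HOL-Probability.Probability"
begin

definition graph_on :: "nat \<Rightarrow> (nat \<Rightarrow> nat \<Rightarrow> bool) \<Rightarrow> bool" where
  "graph_on n E \<longleftrightarrow> (\<forall>u v. E u v \<longrightarrow> u \<in> {1..n} \<and> v \<in> {1..n} \<and> u \<noteq> v \<and> E v u)"

definition nbrs :: "nat \<Rightarrow> (nat \<Rightarrow> nat \<Rightarrow> bool) \<Rightarrow> nat \<Rightarrow> nat set" where
  "nbrs n E v = {u \<in> {1..n}. E v u}"

definition bp_step :: "nat \<Rightarrow> (nat \<Rightarrow> nat \<Rightarrow> bool) \<Rightarrow> nat \<Rightarrow> nat set \<Rightarrow> nat set" where
  "bp_step n E r A = A \<union> {v \<in> {1..n}. card (nbrs n E v \<inter> A) \<ge> r}"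

definition bp_closure :: "nat \<Rightarrow> (nat \<Rightarrow> nat \<Rightarrow> bool) \<Rightarrow> nat \<Rightarrow> nat set \<Rightarrow> nat set" where
  "bp_closure n E r A0 = (\<Union>i. (bp_step n E r ^^ i) A0)"

definition contagious :: "nat \<Rightarrow> (nat \<Rightarrow> nat \<Rightarrow> bool) \<Rightarrow> nat \<Rightarrow> nat set \<Rightarrow> bool" where
  "contagious n E r A0 \<longleftrightarrow> A0 \<subseteq> {1..n} \<and> bp_closure n E r A0 = {1..n}"

definition m_contag :: "nat \<Rightarrow> (nat \<Rightarrow> nat \<Rightarrow> bool) \<Rightarrow> nat \<Rightarrow> nat" where
  "m_contag n E r = Min (card ` {A. contagious n E r A})"

definition indep_seeds :: "nat \<Rightarrow> real \<Rightarrow> nat set pmf" where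
  "indep_seeds n p = map_pmf (\<lambda>f. {i. f i}) (Pi_pmf {1..n} False (\<lambda>_. bernoulli_pmf p))"

end

theory Submission
  imports Defs
begin

(*
  Call T a completion of an (already active) set C if T avoids C and
  <C \<union> T> covers [n].  Given C \<noteq> [n], draw A from D0 conditioned on the event B that
  <A> is not contained in C, recursively complete C \<union> <A> by some T, and output
  (A - C) \<union> T.  For an uncovered vertex i the event B contains {i \<in> <A>}, so
  Pr[i \<in> output] \<le> p_i/\<beta> + (p_i/q_i)(\<beta> - q_i)/\<beta> = p_i/q_i  where \<beta> = Pr[B];
  induction on the number of uncovered vertices makes this rigorous.

  Taking C = {}
  gives the main claim; averaging |S| over the resulting distribution, applied to
  independent p-seeding, gives m(G,r) \<le> C p n.
*)

section \<open>Bootstrap closure is a closure operator\<close>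

lemma bp_step_mono: "X \<subseteq> Y \<Longrightarrow> bp_step n E r X \<subseteq> bp_step n E r Y"
  unfolding bp_step_def
proof (intro Un_mono subsetI)
  fix v assume XY: "X \<subseteq> Y" and v: "v \<in> {v \<in> {1..n}. r \<le> card (nbrs n E v \<inter> X)}"
  have "finite (nbrs n E v \<inter> Y)" by (simp add: nbrs_def)
  hence "card (nbrs n E v \<inter> X) \<le> card (nbrs n E v \<inter> Y)" using XY by (intro card_mono) auto
  with v show "v \<in> {v \<in> {1..n}. r \<le> card (nbrs n E v \<inter> Y)}" by auto
qed auto

lemma bp_iter_mono: "X \<subseteq> Y \<Longrightarrow> (bp_step n E r ^^ k) X \<subseteq> (bp_step n E r ^^ k) Y"
  by (induction k) (auto dest: bp_step_mono)

lemma bp_iter_incr: "j \<le> k \<Longrightarrow> (bp_step n E r ^^ j) X \<subseteq> (bp_step n E r ^^ k) X"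
  by (induction k rule: dec_induct) (auto simp: bp_step_def)

lemma bp_closure_incr: "X \<subseteq> bp_closure n E r X"
  unfolding bp_closure_def by (metis UN_upper UNIV_I funpow_0)

lemma bp_closure_mono: "X \<subseteq> Y \<Longrightarrow> bp_closure n E r X \<subseteq> bp_closure n E r Y"
  unfolding bp_closure_def using bp_iter_mono[where X=X and Y=Y and n=n and E=E and r=r] by blast

lemma bp_closure_sub: "bp_closure n E r X \<subseteq> X \<union> {1..n}"
proof -
  have "(bp_step n E r ^^ k) X \<subseteq> X \<union> {1..n}" for k
    by (induction k) (auto simp: bp_step_def)
  thus ?thesis unfolding bp_closure_def by auto
qed

lemma finite_subset_bp_iter:
  assumes "finite F" and "F \<subseteq> bp_closure n E r Y"
  shows "\<exists>k. F \<subseteq> (bp_step n E r ^^ k) Y"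
  using assms
proof (induction F rule: finite_induct)
  case empty
  show ?case by blast
next
  case (insert x F)
  then obtain k j where k: "F \<subseteq> (bp_step n E r ^^ k) Y" and j: "x \<in> (bp_step n E r ^^ j) Y"
    by (auto simp: bp_closure_def)
  have "insert x F \<subseteq> (bp_step n E r ^^ max k j) Y"
    using k j bp_iter_incr[of k "max k j" n E r Y] bp_iter_incr[of j "max k j" n E r Y] by auto
  thus ?case by blast
qed

lemma bp_closure_closed: "bp_step n E r (bp_closure n E r Y) \<subseteq> bp_closure n E r Y"
proof
  fix v assume v: "v \<in> bp_step n E r (bp_closure n E r Y)"
  show "v \<in> bp_closure n E r Y"
  proof (cases "v \<in> bp_closure n E r Y")
    case False
    with v have v1: "v \<in> {1..n}" and many: "r \<le> card (nbrs n E v \<inter> bp_closure n E r Y)"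
      by (auto simp: bp_step_def)
    obtain k where k: "nbrs n E v \<inter> bp_closure n E r Y \<subseteq> (bp_step n E r ^^ k) Y"
      using finite_subset_bp_iter[where F="nbrs n E v \<inter> bp_closure n E r Y" and n=n and E=E and r=r and Y=Y]
      by (auto simp: nbrs_def)
    have "card (nbrs n E v \<inter> bp_closure n E r Y) \<le> card (nbrs n E v \<inter> (bp_step n E r ^^ k) Y)"
      using k by (intro card_mono) (auto simp: nbrs_def)
    with many v1 have "v \<in> (bp_step n E r ^^ Suc k) Y" by (auto simp: bp_step_def)
    thus ?thesis unfolding bp_closure_def by blast
  qed
qed

lemma bp_closure_least: "X \<subseteq> bp_closure n E r Y \<Longrightarrow> bp_closure n E r X \<subseteq> bp_closure n E r Y"
proof -
  assume XY: "X \<subseteq> bp_closure n E r Y"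
  have "(bp_step n E r ^^ k) X \<subseteq> bp_closure n E r Y" for k
  proof (induction k)
    case (Suc k)
    then show ?case using bp_step_mono[OF Suc, of n E r] bp_closure_closed[of n E r Y] by auto
  qed (use XY in auto)
  thus ?thesis unfolding bp_closure_def by auto
qed

definition completes :: "nat \<Rightarrow> (nat \<Rightarrow> nat \<Rightarrow> bool) \<Rightarrow> nat \<Rightarrow> nat set \<Rightarrow> nat set \<Rightarrow> bool" where
  "completes n E r C T \<longleftrightarrow> T \<inter> C = {} \<and> T \<subseteq> {1..n} \<and> {1..n} \<subseteq> bp_closure n E r (C \<union> T)"

text \<open>One recursion step: seeding A on top of C activates \<langle>A\<rangle>, so completing C \<union> \<langle>A\<rangle>
  by T means that the new seeds (A - C) \<union> T complete C.\<close>
lemma completes_extend: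
  assumes "A \<subseteq> {1..n}" and "completes n E r (C \<union> bp_closure n E r A) T"
  shows "completes n E r C ((A - C) \<union> T)"
proof -
  let ?cl = "bp_closure n E r" and ?S = "(A - C) \<union> T"
  have T: "T \<inter> (C \<union> ?cl A) = {}" "T \<subseteq> {1..n}" "{1..n} \<subseteq> ?cl ((C \<union> ?cl A) \<union> T)"
    using assms(2) by (auto simp: completes_def)
  have "?cl A \<subseteq> ?cl (C \<union> ?S)" by (rule bp_closure_mono) blast
  moreover have "C \<union> T \<subseteq> ?cl (C \<union> ?S)" using bp_closure_incr[of "C \<union> ?S" n E r] by auto
  ultimately have "?cl ((C \<union> ?cl A) \<union> T) \<subseteq> ?cl (C \<union> ?S)" by (intro bp_closure_least) auto
  with T assms(1) show ?thesis by (auto simp: completes_def)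
qed

lemma completes_empty_contagious: "completes n E r {} S \<Longrightarrow> contagious n E r S"
  using bp_closure_sub[of n E r S] by (auto simp: completes_def contagious_def)

section \<open>Marginals of the two-stage experiment\<close>

lemma prob_bind_pmf:
  "measure_pmf.prob (bind_pmf M f) X = (\<integral>x. measure_pmf.prob (f x) X \<partial>measure_pmf M)"
  unfolding measure_pmf_bind
  by (subst measure_pmf.measure_bind[where N="count_space UNIV"])
     (auto simp: measure_pmf_in_subprob_space)

lemma prob_cond_pmf:
  assumes "set_pmf p \<inter> s \<noteq> {}"
  shows "measure_pmf.prob (cond_pmf p s) X = measure_pmf.prob p (s \<inter> X) / measure_pmf.prob p s"
  unfolding cond_pmf.rep_eq[OF assms]
  by (subst measure_uniform_measure)
     (auto simp: measure_pmf.emeasure_eq_measure measure_measure_pmf_not_zero[OF assms])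

lemma prob_union_pointwise:
  fixes F :: "'a set pmf" and c :: real
  assumes "X \<subseteq> X'" and "0 \<le> c"
    and never: "i \<in> K \<Longrightarrow> \<forall>T\<in>set_pmf F. i \<notin> T"
    and rare: "i \<notin> K \<Longrightarrow> measure_pmf.prob F {T. i \<in> T} \<le> c"
  shows "measure_pmf.prob (map_pmf (\<lambda>T. X \<union> T) F) {S. i \<in> S}
           \<le> (if i \<in> X' then 1 else 0) + c * (if i \<in> K then 0 else 1)"
proof -
  have out: "measure_pmf.prob (map_pmf (\<lambda>T. X \<union> T) F) {S. i \<in> S}
             = measure_pmf.prob F {T. i \<in> X \<or> i \<in> T}" by (simp add: vimage_def)
  consider "i \<in> X'" | "i \<notin> X'" "i \<in> K" | "i \<notin> X'" "i \<notin> K" by blast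
  then show ?thesis
  proof cases
    case 1
    then have "1 \<le> (if i \<in> X' then 1 else 0) + c * (if i \<in> K then 0 else 1)"
      using \<open>0 \<le> c\<close> by simp
    then show ?thesis using measure_pmf.prob_le_1[of F "{T. i \<in> X \<or> i \<in> T}"] unfolding out by linarith
  next
    case 2
    with never \<open>X \<subseteq> X'\<close> have "set_pmf F \<inter> {T. i \<in> X \<or> i \<in> T} = {}" by auto
    then have "measure_pmf.prob F {T. i \<in> X \<or> i \<in> T} = 0" by (simp add: measure_pmf_zero_iff)
    with 2 show ?thesis unfolding out by simp
  next
    case 3
    with \<open>X \<subseteq> X'\<close> have "{T. i \<in> X \<or> i \<in> T} = {T. i \<in> T}" by auto
    with 3 rare show ?thesis unfolding out by simp
  qed
qed

lemma marginal_after_conditioning: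
  fixes i :: 'a and B :: "'a set set" and C :: "'a set" and D0 :: "'a set pmf"
    and cl :: "'a set \<Rightarrow> 'a set" and F :: "'a set \<Rightarrow> 'a set pmf"
  defines "p \<equiv> measure_pmf.prob D0 {A. i \<in> A}" and "q \<equiv> measure_pmf.prob D0 {A. i \<in> cl A}"
  assumes extensive: "\<And>A. A \<subseteq> cl A"
    and covers: "{A. i \<in> cl A} \<subseteq> B"
    and q_pos: "0 < q"
    and avoid: "\<And>A T. A \<in> set_pmf (cond_pmf D0 B) \<Longrightarrow> T \<in> set_pmf (F A) \<Longrightarrow> i \<in> cl A \<Longrightarrow> i \<notin> T"
    and recur: "\<And>A. A \<in> set_pmf (cond_pmf D0 B) \<Longrightarrow> i \<notin> cl A \<Longrightarrow>
                  measure_pmf.prob (F A) {T. i \<in> T} \<le> p / q"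
  shows "measure_pmf.prob (bind_pmf (cond_pmf D0 B) (\<lambda>A. map_pmf (\<lambda>T. (A - C) \<union> T) (F A)))
           {S. i \<in> S} \<le> p / q"
proof -
  define M where "M = cond_pmf D0 B"
  define \<beta> where "\<beta> = measure_pmf.prob D0 B"
  define g where "g = (\<lambda>A. indicator {A. i \<in> A} A + (p / q) * indicator {A. i \<notin> cl A} A :: real)"
  let ?out = "\<lambda>A. measure_pmf.prob (map_pmf (\<lambda>T. (A - C) \<union> T) (F A)) {S. i \<in> S}"
  have pq: "0 \<le> p / q" using q_pos by (simp add: p_def)
  have q_le_\<beta>: "q \<le> \<beta>" unfolding q_def \<beta>_def using covers by (rule measure_pmf.finite_measure_mono) simp
  have ne: "set_pmf D0 \<inter> B \<noteq> {}"
    using q_pos covers measure_pmf_zero_iff[of D0 "{A. i \<in> cl A}"] by (auto simp: q_def)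
  have pointwise: "?out A \<le> g A" if A: "A \<in> set_pmf M" for A
  proof -
    have "?out A \<le> (if i \<in> A then 1 else 0) + p / q * (if i \<in> cl A then 0 else 1)"
      by (rule prob_union_pointwise) (use A avoid[of A] recur[of A] pq in \<open>auto simp: M_def\<close>)
    also have "\<dots> = g A" by (simp add: g_def indicator_def)
    finally show ?thesis .
  qed
  have "measure_pmf.prob (bind_pmf M (\<lambda>A. map_pmf (\<lambda>T. (A - C) \<union> T) (F A))) {S. i \<in> S}
        = (\<integral>A. ?out A \<partial>M)" by (rule prob_bind_pmf)
  also have "\<dots> \<le> (\<integral>A. g A \<partial>M)"
  proof (rule integral_mono_AE)
    show "integrable M ?out"
      by (rule measure_pmf.integrable_const_bound[where B=1]) auto
    show "integrable M g" unfolding g_def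
      by (rule measure_pmf.integrable_const_bound[where B="1 + p / q"]) (auto simp: indicator_def pq)
  qed (rule AE_pmfI, rule pointwise)
  also have "(\<integral>A. g A \<partial>M) = measure_pmf.prob M {A. i \<in> A} + (p / q) * measure_pmf.prob M {A. i \<notin> cl A}"
  proof -
    have ind_int: "integrable M (\<lambda>A. indicator X A :: real)" for X
      by (rule measure_pmf.integrable_const_bound[where B=1]) auto
    show ?thesis unfolding g_def
      by (subst Bochner_Integration.integral_add) (simp_all add: ind_int)
  qed
  also have "measure_pmf.prob M {A. i \<in> A} = p / \<beta>"
  proof -
    have "B \<inter> {A. i \<in> A} = {A. i \<in> A}" using covers extensive by blast
    thus ?thesis unfolding M_def using prob_cond_pmf[OF ne] by (simp add: p_def \<beta>_def)
  qed
  also have "measure_pmf.prob M {A. i \<notin> cl A} = (\<beta> - q) / \<beta>"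
  proof -
    have "B \<inter> {A. i \<notin> cl A} = B - {A. i \<in> cl A}" by blast
    moreover have "measure_pmf.prob D0 (B - {A. i \<in> cl A}) = \<beta> - q"
      unfolding \<beta>_def q_def by (rule measure_pmf.finite_measure_Diff) (use covers in auto)
    ultimately show ?thesis unfolding M_def using prob_cond_pmf[OF ne] by (simp add: \<beta>_def)
  qed
  also have "p / \<beta> + p / q * ((\<beta> - q) / \<beta>) = p / q"
    using q_pos q_le_\<beta> by (simp add: field_simps)
  finally show ?thesis by (simp add: M_def)
qed

section \<open>Constructing random completions\<close>

lemma completion_distribution:
  fixes D0 :: "nat set pmf"
  assumes supp: "set_pmf D0 \<subseteq> Pow {1..n}"
    and pos: "\<forall>i\<in>{1..n}. 0 < measure_pmf.prob D0 {A. i \<in> bp_closure n E r A}"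
  shows "\<exists>D. (\<forall>T\<in>set_pmf D. completes n E r C T) \<and>
             (\<forall>i\<in>{1..n} - C. measure_pmf.prob D {T. i \<in> T}
                \<le> measure_pmf.prob D0 {A. i \<in> A} / measure_pmf.prob D0 {A. i \<in> bp_closure n E r A})"
proof (induction "card ({1..n} - C)" arbitrary: C rule: less_induct)
  case less
  let ?cl = "bp_closure n E r"
  let ?ratio = "\<lambda>i. measure_pmf.prob D0 {A. i \<in> A} / measure_pmf.prob D0 {A. i \<in> ?cl A}"
  show ?case
  proof (cases "{1..n} \<subseteq> C")
    case True
    then have "completes n E r C {}" using bp_closure_incr[of C n E r] by (auto simp: completes_def)
    with True show ?thesis by (intro exI[of _ "return_pmf {}"]) auto
  next
    case False
    define B where "B = {A. \<not> ?cl A \<subseteq> C}"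
    define M where "M = cond_pmf D0 B"
    obtain i0 where i0: "i0 \<in> {1..n}" "i0 \<notin> C" using False by blast
    have "measure_pmf.prob D0 {A. i0 \<in> ?cl A} \<noteq> 0" using pos i0 by fastforce
    then have "set_pmf D0 \<inter> {A. i0 \<in> ?cl A} \<noteq> {}" by (simp add: measure_pmf_zero_iff)
    moreover have "{A. i0 \<in> ?cl A} \<subseteq> B" using i0 by (auto simp: B_def)
    ultimately have "set_pmf D0 \<inter> B \<noteq> {}" by blast
    then have M_supp: "A \<subseteq> {1..n}" "\<not> ?cl A \<subseteq> C" if "A \<in> set_pmf M" for A
      using that supp by (auto simp: M_def B_def)
    have progress: "card ({1..n} - (C \<union> ?cl A)) < card ({1..n} - C)" if "A \<in> set_pmf M" for A
    proof -
      have "?cl A \<subseteq> {1..n}" using bp_closure_sub[of n E r A] M_supp[OF that] by auto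
      with M_supp[OF that] show ?thesis by (intro psubset_card_mono) auto
    qed
    obtain F where F: "\<And>A. A \<in> set_pmf M \<Longrightarrow> (\<forall>T\<in>set_pmf (F A). completes n E r (C \<union> ?cl A) T) \<and>
        (\<forall>i\<in>{1..n} - (C \<union> ?cl A). measure_pmf.prob (F A) {T. i \<in> T} \<le> ?ratio i)"
      using less(1)[OF progress] by metis
    define D where "D = bind_pmf M (\<lambda>A. map_pmf (\<lambda>T. (A - C) \<union> T) (F A))"
    show ?thesis
    proof (intro exI[of _ D] conjI ballI)
      fix S assume "S \<in> set_pmf D"
      then obtain A T where A: "A \<in> set_pmf M" and T: "T \<in> set_pmf (F A)" and S: "S = (A - C) \<union> T"
        by (auto simp: D_def)
      show "completes n E r C S" unfolding S using M_supp(1)[OF A] F[OF A] T by (intro completes_extend) auto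
    next
      fix i assume i: "i \<in> {1..n} - C"
      show "measure_pmf.prob D {T. i \<in> T} \<le> ?ratio i" unfolding D_def M_def
      proof (rule marginal_after_conditioning)
        show "A \<subseteq> ?cl A" for A by (rule bp_closure_incr)
        show "{A. i \<in> ?cl A} \<subseteq> B" using i by (auto simp: B_def)
        show "0 < measure_pmf.prob D0 {A. i \<in> ?cl A}" using pos i by auto
        show "i \<notin> T" if "A \<in> set_pmf (cond_pmf D0 B)" "T \<in> set_pmf (F A)" "i \<in> ?cl A" for A T
          using F[of A] that by (auto simp: M_def completes_def)
        show "measure_pmf.prob (F A) {T. i \<in> T} \<le> ?ratio i"
          if "A \<in> set_pmf (cond_pmf D0 B)" "i \<notin> ?cl A" for A
          using F[of A] that i by (auto simp: M_def)
      qed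
    qed
  qed
qed

lemma contagious_distribution:
  fixes D0 :: "nat set pmf"
  assumes "set_pmf D0 \<subseteq> Pow {1..n}"
    and "\<forall>i\<in>{1..n}. 0 < measure_pmf.prob D0 {A. i \<in> bp_closure n E r A}"
  shows "\<exists>D. (\<forall>S\<in>set_pmf D. contagious n E r S) \<and>
             (\<forall>i\<in>{1..n}. measure_pmf.prob D {S. i \<in> S}
                \<le> measure_pmf.prob D0 {A. i \<in> A} / measure_pmf.prob D0 {A. i \<in> bp_closure n E r A})"
  using completion_distribution[OF assms, of "{}"] completes_empty_contagious by blast

lemma m_contag_le_expected_size:
  assumes contag: "\<forall>S\<in>set_pmf D. contagious n E r S"
  shows "real (m_contag n E r) \<le> (\<Sum>i\<in>{1..n}. measure_pmf.prob D {S. i \<in> S})"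
proof -
  have fin: "finite (card ` {A. contagious n E r A})"
    by (rule finite_imageI, rule finite_subset[of _ "Pow {1..n}"]) (auto simp: contagious_def)
  have sub: "S \<subseteq> {1..n}" if "S \<in> set_pmf D" for S
    using contag that by (auto simp: contagious_def)
  have ind_int: "integrable D (\<lambda>S. indicator X S :: real)" for X
    by (rule measure_pmf.integrable_const_bound[where B=1]) auto
  have size: "(\<Sum>i\<in>{1..n}. indicator {S. i \<in> S} S) = real (card S)" if "S \<in> set_pmf D" for S
  proof -
    have "card S = card ({1..n} \<inter> S)" using sub[OF that] by (simp add: Int_absorb1)
    also have "\<dots> = (\<Sum>i\<in>{1..n}. indicator S i)" by (simp add: sum_indicator_eq_card)
    finally show ?thesis by (simp add: indicator_def)
  qed
  have "(\<Sum>i\<in>{1..n}. measure_pmf.prob D {S. i \<in> S})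
        = (\<integral>S. (\<Sum>i\<in>{1..n}. indicator {S. i \<in> S} S) \<partial>D)"
    by (subst Bochner_Integration.integral_sum) (simp_all add: ind_int)
  also have "\<dots> = (\<integral>S. real (card S) \<partial>D)"
    by (rule integral_cong_AE) (simp, simp, rule AE_pmfI, rule size)
  also have "real (m_contag n E r) \<le> \<dots>"
  proof (rule measure_pmf.integral_ge_const)
    have "norm (real (card S)) \<le> real n" if "S \<in> set_pmf D" for S
      using card_mono[OF _ sub[OF that]] by simp
    then show "integrable D (\<lambda>S. real (card S))"
      by (intro measure_pmf.integrable_const_bound[where B="real n"] AE_pmfI) simp_all
    have "m_contag n E r \<le> card S" if "S \<in> set_pmf D" for S
    proof -
      have "card S \<in> card ` {A. contagious n E r A}" using contag that by blast
      then show ?thesis unfolding m_contag_def by (rule Min_le[OF fin])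
    qed
    then show "AE S in D. real (m_contag n E r) \<le> real (card S)"
      by (intro AE_pmfI) simp
  qed
  finally show ?thesis .
qed

lemma indep_seeds_support: "set_pmf (indep_seeds n p) \<subseteq> Pow {1..n}"
proof
  fix A assume "A \<in> set_pmf (indep_seeds n p)"
  then obtain f where "f \<in> set_pmf (Pi_pmf {1..n} False (\<lambda>_. bernoulli_pmf p))" and "A = {i. f i}"
    by (auto simp: indep_seeds_def)
  then show "A \<in> Pow {1..n}" using set_Pi_pmf_subset[of "{1..n}" False "\<lambda>_. bernoulli_pmf p"] by blast
qed

lemma indep_seeds_marginal:
  assumes "0 \<le> p" "p \<le> 1" "i \<in> {1..n}"
  shows "measure_pmf.prob (indep_seeds n p) {A. i \<in> A} = p"
proof -
  let ?P = "Pi_pmf {1..n} False (\<lambda>_. bernoulli_pmf p)"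
  have "measure_pmf.prob (indep_seeds n p) {A. i \<in> A} = measure_pmf.prob (map_pmf (\<lambda>f. f i) ?P) {True}"
    by (simp add: indep_seeds_def vimage_def)
  also have "\<dots> = measure_pmf.prob (bernoulli_pmf p) {True}"
    using assms(3) by (subst Pi_pmf_component) auto
  also have "\<dots> = p" using assms(1,2) by (simp add: measure_pmf_single)
  finally show ?thesis .
qed

lemma m_contag_bound:
  fixes p C :: real
  assumes p: "0 \<le> p" "p \<le> 1" and C: "C > 1"
    and q: "\<forall>i\<in>{1..n}. measure_pmf.prob (indep_seeds n p) {A. i \<in> bp_closure n E r A} \<ge> 1 / C"
  shows "real (m_contag n E r) \<le> C * p * real n"
proof -
  let ?q = "\<lambda>i. measure_pmf.prob (indep_seeds n p) {A. i \<in> bp_closure n E r A}"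
  have q_i: "1 \<le> C * ?q i" "0 < ?q i" if "i \<in> {1..n}" for i
  proof -
    have lb: "1 / C \<le> ?q i" using q that by blast
    with C show "1 \<le> C * ?q i" by (simp add: divide_le_eq mult.commute)
    have "0 < 1 / C" using C by simp
    with lb show "0 < ?q i" by linarith
  qed
  obtain D where contag: "\<forall>S\<in>set_pmf D. contagious n E r S"
    and marg: "\<forall>i\<in>{1..n}. measure_pmf.prob D {S. i \<in> S}
                 \<le> measure_pmf.prob (indep_seeds n p) {A. i \<in> A} / ?q i"
    using contagious_distribution[OF indep_seeds_support] q_i(2) by blast
  have "measure_pmf.prob D {S. i \<in> S} \<le> C * p" if i: "i \<in> {1..n}" for i
  proof -
    have "p * 1 \<le> p * (C * ?q i)" using q_i(1)[OF i] p(1) by (rule mult_left_mono)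
    then have "p / ?q i \<le> C * p" using q_i(2)[OF i] by (simp add: divide_le_eq mult_ac)
    moreover have "measure_pmf.prob D {S. i \<in> S} \<le> p / ?q i"
      using marg i indep_seeds_marginal[OF p i] by metis
    ultimately show ?thesis by linarith
  qed
  then have "(\<Sum>i\<in>{1..n}. measure_pmf.prob D {S. i \<in> S}) \<le> (\<Sum>i\<in>{1..n}. C * p)"
    by (rule sum_mono)
  with m_contag_le_expected_size[OF contag] show ?thesis by (simp add: mult_ac)
qed

text \<open>The theorem.\<close>
theorem lemma2:
  fixes n r :: nat and E :: "nat \<Rightarrow> nat \<Rightarrow> bool"
  assumes "graph_on n E" and "r \<ge> 2"
  shows "(\<forall>D0 :: nat set pmf.
            set_pmf D0 \<subseteq> Pow {1..n} \<longrightarrow>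
            (\<forall>i\<in>{1..n}. measure_pmf.prob D0 {A. i \<in> bp_closure n E r A} > 0) \<longrightarrow>
            (\<exists>D :: nat set pmf.
               (\<forall>S\<in>set_pmf D. contagious n E r S) \<and>
               (\<forall>i\<in>{1..n}. measure_pmf.prob D {S. i \<in> S}
                  \<le> measure_pmf.prob D0 {A. i \<in> A} / measure_pmf.prob D0 {A. i \<in> bp_closure n E r A})))
       \<and> (\<forall>(p::real) (C::real).
            0 \<le> p \<longrightarrow> p \<le> 1 \<longrightarrow> C > 1 \<longrightarrow>
            (\<forall>i\<in>{1..n}. measure_pmf.prob (indep_seeds n p) {A. i \<in> bp_closure n E r A} \<ge> 1 / C) \<longrightarrow>
            real (m_contag n E r) \<le> C * p * real n)"
  by (intro conjI allI impI contagious_distribution m_contag_bound) assumption+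

end
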